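(* Let $n \geq 1$ and let $B$ be a log-product expression with $L(B) \subseteq P_n$. Then $|L(B)|\leq n! \cdot 4^{1-n} n^{\frac14 [ 3+\log n ]}$.
   Context: $P_n$ is the language of all permutations of the alphabet $\Sigma=\{1,\dots,n\}$, i.e. words of length $n$ in which each letter of $\Sigma$ occurs exactly once. Regular expressions (without star, without $\emptyset$) are built from $\epsilon$ and letters by union and concatenation. A homogeneous expression describes a language all of whose words have the same length, its degree $\deg R$. A homogeneous expression $B$ is log-product if it is a letter, or there are homogeneous expressions $B_1,B_2$ with $B_1$ log-product, $\deg B_1\ge\deg B_2$ and $B=B_1B_2$ or $B=B_2B_1$. Logarithms are base 2. *)

theory Defs
  imports Complex_Main
begin

datatype rexp = Eps | Lit nat | Union rexp rexp | Concat rexp rexp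

fun lang :: "rexp \<Rightarrow> nat list set" where
  "lang Eps = {[]}"
| "lang (Lit a) = {[a]}"
| "lang (Union r s) = lang r \<union> lang s"
| "lang (Concat r s) = {u @ v | u v. u \<in> lang r \<and> v \<in> lang s}"

definition homogeneous :: "rexp \<Rightarrow> bool" where
  "homogeneous r \<longleftrightarrow> (\<forall>u\<in>lang r. \<forall>v\<in>lang r. length u = length v)"

text \<open>Degree: the common length of the words (the language is never empty).\<close>
definition deg :: "rexp \<Rightarrow> nat" where
  "deg r = length (SOME w. w \<in> lang r)"

inductive log_product :: "rexp \<Rightarrow> bool" where
  lit: "log_product (Lit a)"
| left: "\<lbrakk>log_product B1; homogeneous B1; homogeneous B2; deg B1 \<ge> deg B2\<rbrakk>
         \<Longrightarrow> log_product (Concat B1 B2)"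
| right: "\<lbrakk>log_product B1; homogeneous B1; homogeneous B2; deg B1 \<ge> deg B2\<rbrakk>
         \<Longrightarrow> log_product (Concat B2 B1)"

definition perms :: "nat \<Rightarrow> nat list set" where
  "perms n = {w. distinct w \<and> set w = {1..n}}"

end

theory Submission
  imports Defs "HOL-Analysis.Convex" "HOL-Combinatorics.Multiset_Permutations"
begin

text \<open>
  Write F(n) = n! 4^(1-n) q(n) with q(x) = x^((3 + log x)/4). If L(B) consists of
  permutations of S for a log-product expression B = B1 B2 (or B2 B1), the words of B1
  and B2 are permutations of complementary subsets of S of sizes k >= m, so by
  induction |L(B)| <= F(k) m!. It therefore suffices that F(k) m! <= F(k + m), i.e.
  4^m k! m! q(k) <= (k + m)! q(k + m) for m <= k. This is proved by induction along the
  diagonal (k, m) -> (k + 1, m + 1); since ln q is quadratic in ln x, the induction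
  step reduces to elementary estimates of logarithms.
\<close>

definition qpoly :: "real \<Rightarrow> real" where
  "qpoly x = x powr ((3 + log 2 x) / 4)"

definition perm_bound :: "nat \<Rightarrow> real" where
  "perm_bound n = fact n * 4 powr (1 - real n) * qpoly (real n)"

lemma qpoly_pos: "x > 0 \<Longrightarrow> qpoly x > 0"
  by (simp add: qpoly_def)

lemma qpoly_1 [simp]: "qpoly 1 = 1"
  by (simp add: qpoly_def)

lemma qpoly_2 [simp]: "qpoly 2 = 2"
  by (simp add: qpoly_def)

lemma ln_qpoly: "x > 0 \<Longrightarrow> ln (qpoly x) = (3 * ln x + (ln x)\<^sup>2 / ln 2) / 4"
  by (simp add: qpoly_def ln_powr log_def power2_eq_square field_simps)

subsection \<open>Elementary logarithm estimates\<close>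

lemma ln_add_one_ge_div:
  fixes x :: real
  assumes "0 \<le> x"
  shows "2 * x / (2 + x) \<le> ln (1 + x)"
proof -
  let ?f = "\<lambda>x::real. ln (1 + x) - 2 * x / (2 + x)"
  have "?f 0 \<le> ?f x"
  proof (rule DERIV_nonneg_imp_nondecreasing[OF assms])
    fix y :: real
    assume "0 \<le> y"
    have "DERIV ?f y :> 1 / (1 + y) - 4 / (2 + y)\<^sup>2"
      using \<open>0 \<le> y\<close> by (auto intro!: derivative_eq_intros simp: power2_eq_square field_simps)
    moreover have "4 * (1 + y) \<le> (2 + y)\<^sup>2"
      by (simp add: power2_eq_square algebra_simps)
    then have "4 / (2 + y)\<^sup>2 \<le> 1 / (1 + y)"
      using \<open>0 \<le> y\<close> by (simp add: field_simps)
    ultimately show "\<exists>d. DERIV ?f y :> d \<and> 0 \<le> d"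
      by auto
  qed
  then show ?thesis
    by simp
qed

lemma mult_ln2_le_ln_add_one:
  fixes t :: real
  assumes "0 \<le> t" "t \<le> 1"
  shows "t * ln 2 \<le> ln (1 + t)"
proof -
  have "exp ((1 - t) * 0 + t * ln 2) \<le> (1 - t) * exp 0 + t * exp (ln 2)"
    using convex_onD[OF exp_convex, of t 0 "ln 2"] assms by simp
  then have "exp (t * ln 2) \<le> 1 + t"
    by simp
  then show ?thesis
    using assms by (subst ln_ge_iff) auto
qed

lemma ln_product_ratio_ge:
  fixes K N :: real
  assumes "1 \<le> K" "K \<le> N" "N \<le> 2 * K"
  shows "2 * ((N - K) / K) \<le> ln (N * (N + 2) / (K * (K + 1))) / ln 2"
proof -
  have "N / K \<le> (N + 2) / (K + 1)"
    using assms by (simp add: field_simps)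
  then have "(N / K)\<^sup>2 \<le> N * (N + 2) / (K * (K + 1))"
    using assms mult_left_mono[of "N / K" "(N + 2) / (K + 1)" "N / K"]
    by (simp add: power2_eq_square)
  then have "ln ((N / K)\<^sup>2) \<le> ln (N * (N + 2) / (K * (K + 1)))"
    using assms by (subst ln_le_cancel_iff) auto
  moreover have "1 + (N - K) / K = N / K"
    using assms by (simp add: field_simps)
  then have "ln ((N / K)\<^sup>2) = 2 * ln (1 + (N - K) / K)"
    using assms by (simp add: ln_realpow)
  moreover have "(N - K) / K * ln 2 \<le> ln (1 + (N - K) / K)"
    using assms by (intro mult_ln2_le_ln_add_one) (auto simp: field_simps)
  ultimately have "2 * ((N - K) / K) * ln 2 \<le> ln (N * (N + 2) / (K * (K + 1)))"
    by linarith
  then show ?thesis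
    by (simp add: pos_le_divide_eq)
qed

lemma ln_ratio_mult_ln_product_ratio_ge:
  fixes K N :: real
  assumes "1 \<le> K" "K \<le> N" "N \<le> 2 * K"
  shows "4 * ((N - K) / ((N + 1) * K))
    \<le> ln ((N + 2) / N) * (ln (N * (N + 2) / (K * (K + 1))) / ln 2)"
proof -
  have "2 * (2 / N) / (2 + 2 / N) \<le> ln (1 + 2 / N)"
    using assms by (intro ln_add_one_ge_div) auto
  moreover have "2 * (2 / N) / (2 + 2 / N) = 2 / (N + 1)" "1 + 2 / N = (N + 2) / N"
    using assms by (simp_all add: field_simps)
  ultimately have "2 / (N + 1) \<le> ln ((N + 2) / N)"
    by simp
  then have "2 / (N + 1) * (2 * ((N - K) / K))
      \<le> ln ((N + 2) / N) * (ln (N * (N + 2) / (K * (K + 1))) / ln 2)"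
    using ln_product_ratio_ge[OF assms] assms by (intro mult_mono) auto
  moreover have "4 * ((N - K) / ((N + 1) * K)) = 2 / (N + 1) * (2 * ((N - K) / K))"
    using assms by (simp add: field_simps)
  ultimately show ?thesis
    by simp
qed

lemma ln_ratio_sum_le:
  fixes K N :: real
  assumes "1 \<le> K" "K \<le> N"
  shows "ln (N / (N + 1)) + ln ((K + 1) / K) \<le> (N - K) / ((N + 1) * K)"
proof -
  have "ln (N / (N + 1)) + ln ((K + 1) / K) = ln (N * (K + 1) / ((N + 1) * K))"
    using assms by (simp add: ln_mult ln_div)
  also have "\<dots> \<le> N * (K + 1) / ((N + 1) * K) - 1"
    using assms by (intro ln_le_minus_one) auto
  also have "\<dots> = (N * (K + 1) - (N + 1) * K) / ((N + 1) * K)"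
    using assms by (simp add: diff_divide_distrib)
  also have "\<dots> = (N - K) / ((N + 1) * K)"
    by (simp add: algebra_simps)
  finally show ?thesis .
qed

subsection \<open>The diagonal step for \<open>qpoly\<close>\<close>

lemma ln_increment_estimate:
  fixes K N :: real
  assumes "1 \<le> K" "K \<le> N" "N \<le> 2 * K"
  shows "4 * (ln (N + 2) - ln (N + 1))
    \<le> 3 * (ln (N + 2) - ln N) - 3 * (ln (K + 1) - ln K)
      + (ln (N + 2))\<^sup>2 / ln 2 - (ln N)\<^sup>2 / ln 2 - (ln (K + 1))\<^sup>2 / ln 2 + (ln K)\<^sup>2 / ln 2"
proof -
  define a a1 b b1 b2 L
    where "a = ln K" "a1 = ln (K + 1)" "b = ln N" "b1 = ln (N + 1)" "b2 = ln (N + 2)" "L = ln (2::real)"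
  note defs = a_a1_b_b1_b2_L_def
  have "L > 0"
    by (simp add: defs)
  have "(K + 1) / K \<le> (N + 2) / N"
    using assms by (simp add: field_simps)
  then have "ln ((K + 1) / K) \<le> ln ((N + 2) / N)"
    using assms by (subst ln_le_cancel_iff) auto
  then have "a1 - a \<le> b2 - b"
    using assms by (simp add: defs ln_div)
  moreover have "2 \<le> K * (K + 1)"
    using assms mult_mono[of 1 K 2 "K + 1"] by simp
  then have "ln 2 \<le> ln (K * (K + 1))"
    using assms by (subst ln_le_cancel_iff) auto
  then have "L \<le> a + a1"
    using assms by (simp add: defs ln_mult)
  ultimately have "b2 - b - (a1 - a) \<le> (b2 - b - (a1 - a)) * (a + a1) / L"
    using \<open>L > 0\<close> mult_left_mono[of L "a + a1" "b2 - b - (a1 - a)"] by (simp add: pos_le_divide_eq)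
  moreover have "4 * ((N - K) / ((N + 1) * K)) \<le> (b2 - b) * (b + b2 - (a + a1)) / L"
    using ln_ratio_mult_ln_product_ratio_ge[OF assms] assms by (simp add: defs ln_mult ln_div)
  moreover have "b - b1 + a1 - a \<le> (N - K) / ((N + 1) * K)"
    using ln_ratio_sum_le[of K N] assms by (simp add: defs ln_div)
  moreover have "b2\<^sup>2 / L - b\<^sup>2 / L - a1\<^sup>2 / L + a\<^sup>2 / L
      = (b2 - b - (a1 - a)) * (a + a1) / L + (b2 - b) * (b + b2 - (a + a1)) / L"
    using \<open>L > 0\<close> by (simp add: power2_eq_square field_simps)
  ultimately show ?thesis
    unfolding defs by (smt (verit))
qed

lemma qpoly_ratio_le:
  fixes K N :: real
  assumes "1 \<le> K" "K \<le> N" "N \<le> 2 * K"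
  shows "(N + 2) * qpoly N * qpoly (K + 1) \<le> (N + 1) * qpoly (N + 2) * qpoly K"
proof -
  have "0 < N" "0 < N + 2" "0 < K" "0 < K + 1"
    using assms by auto
  then have "ln (N + 2) + ln (qpoly N) + ln (qpoly (K + 1)) \<le> ln (N + 1) + ln (qpoly (N + 2)) + ln (qpoly K)"
    using ln_increment_estimate[OF assms] by (simp add: ln_qpoly) argo
  moreover have pos: "qpoly N > 0" "qpoly (N + 2) > 0" "qpoly K > 0" "qpoly (K + 1) > 0"
    using assms by (simp_all add: qpoly_pos)
  ultimately have "ln ((N + 2) * qpoly N * qpoly (K + 1)) \<le> ln ((N + 1) * qpoly (N + 2) * qpoly K)"
    using assms by (simp add: ln_mult)
  then show ?thesis
    using assms pos by simp
qed

lemma qpoly_diagonal_step: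
  fixes K M :: real
  assumes "1 \<le> K" "0 \<le> M" "M \<le> K"
  shows "4 * (K + 1) * (M + 1) * qpoly (K + M) * qpoly (K + 1)
    \<le> (K + M + 2) * (K + M + 1) * qpoly (K + M + 2) * qpoly K"
proof -
  have "0 \<le> (K - M)\<^sup>2"
    by simp
  then have "4 * (K + 1) * (M + 1) \<le> (K + M + 2) * (K + M + 2)"
    by (simp add: power2_eq_square algebra_simps)
  then have "4 * (K + 1) * (M + 1) * (qpoly (K + M) * qpoly (K + 1))
      \<le> (K + M + 2) * ((K + M + 2) * qpoly (K + M) * qpoly (K + 1))"
    using assms by (simp add: mult_right_mono qpoly_pos less_imp_le mult.assoc)
  also have "\<dots> \<le> (K + M + 2) * ((K + M + 1) * qpoly (K + M + 2) * qpoly K)"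
    using qpoly_ratio_le[of K "K + M"] assms by (intro mult_left_mono) (auto simp: add.assoc)
  finally show ?thesis
    by (simp add: algebra_simps)
qed

lemma four_pow_fact_qpoly_le:
  fixes k m :: nat
  assumes "1 \<le> k" "m \<le> k"
  shows "4 ^ m * fact k * fact m * qpoly k \<le> fact (k + m) * qpoly (k + m)"
  using assms
proof (induction m arbitrary: k)
  case 0
  then show ?case
    by simp
next
  case (Suc m)
  then obtain j where k: "k = Suc j" "m \<le> j"
    by (cases k) auto
  show ?case
  proof (cases "j = 0")
    case True
    with k show ?thesis
      by (simp add: numeral_2_eq_2[symmetric])
  next
    case False
    define X Y :: real where "X = 4 ^ m * fact j * fact m" "Y = fact (j + m)"
    have "X * qpoly j \<le> Y * qpoly (j + m)"
      using Suc.IH[of j] False k by (simp add: X_Y_def)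
    have step: "4 * (real j + 1) * (real m + 1) * qpoly (real j + real m) * qpoly (real j + 1)
        \<le> (real j + real m + 2) * (real j + real m + 1) * qpoly (real j + real m + 2) * qpoly j"
      using False k by (intro qpoly_diagonal_step) auto
    have "(4 ^ Suc m * fact k * fact (Suc m) * qpoly k) * qpoly j
        = 4 * (real j + 1) * (real m + 1) * qpoly (real j + 1) * (X * qpoly j)"
      by (simp add: k X_Y_def algebra_simps)
    also have "\<dots> \<le> 4 * (real j + 1) * (real m + 1) * qpoly (real j + 1) * (Y * qpoly (j + m))"
      using \<open>X * qpoly j \<le> Y * qpoly (j + m)\<close> by (intro mult_left_mono) (auto simp: qpoly_pos less_imp_le)
    also have "\<dots> \<le> Y * ((real j + real m + 2) * (real j + real m + 1) * qpoly (real j + real m + 2) * qpoly j)"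
      using mult_left_mono[OF step, of Y] by (simp add: X_Y_def algebra_simps)
    also have "\<dots> = (fact (k + Suc m) * qpoly (k + Suc m)) * qpoly j"
      by (simp add: k X_Y_def algebra_simps add_ac)
    finally show ?thesis
      using False by (simp add: qpoly_pos)
  qed
qed

lemma perm_bound_mult_fact_le:
  assumes "1 \<le> k" "m \<le> k"
  shows "perm_bound k * fact m \<le> perm_bound (k + m)"
proof -
  have "(4::real) ^ m * 4 powr (1 - real (k + m)) = 4 powr (1 - real k)"
    by (simp add: powr_realpow[symmetric] powr_add[symmetric])
  then have "perm_bound k * fact m = (4 ^ m * fact k * fact m * qpoly k) * 4 powr (1 - real (k + m))"
    unfolding perm_bound_def by (simp add: algebra_simps)
  also have "\<dots> \<le> (fact (k + m) * qpoly (k + m)) * 4 powr (1 - real (k + m))"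
    using four_pow_fact_qpoly_le[OF assms] by (intro mult_right_mono) auto
  also have "\<dots> = perm_bound (k + m)"
    by (simp add: perm_bound_def)
  finally show ?thesis .
qed

subsection \<open>Languages of log-product expressions\<close>

lemma lang_Concat_image: "lang (Concat r s) = (\<lambda>(u, v). u @ v) ` (lang r \<times> lang s)"
  by auto

lemma finite_lang: "finite (lang r)"
  by (induction r) (auto simp: lang_Concat_image simp del: lang.simps(4))

lemma lang_nonempty: "lang r \<noteq> {}"
  by (induction r) auto

lemma card_lang_Concat_le: "card (lang (Concat r s)) \<le> card (lang r) * card (lang s)"
proof -
  have "card (lang (Concat r s)) \<le> card (lang r \<times> lang s)"
    unfolding lang_Concat_image by (rule card_image_le) (simp add: finite_lang)
  then show ?thesis
    by (simp add: card_cartesian_product)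
qed

lemma length_eq_deg:
  assumes "homogeneous r" "w \<in> lang r"
  shows "length w = deg r"
proof -
  have "(SOME w. w \<in> lang r) \<in> lang r"
    using assms(2) by (rule someI)
  then show ?thesis
    using assms unfolding deg_def homogeneous_def by blast
qed

lemma log_product_Nil_notin: "log_product B \<Longrightarrow> [] \<notin> lang B"
  by (induction B rule: log_product.induct) auto

lemma lang_Concat_permutations_of_set_split:
  assumes "lang (Concat X Y) \<subseteq> permutations_of_set S"
  obtains SX SY where "lang X \<subseteq> permutations_of_set SX" "lang Y \<subseteq> permutations_of_set SY"
    "card SX + card SY = card S"
proof -
  obtain u0 v0 where u0: "u0 \<in> lang X" and v0: "v0 \<in> lang Y"
    using lang_nonempty by blast
  have perm: "set u \<union> set v = S \<and> set u \<inter> set v = {} \<and> distinct u \<and> distinct v"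
    if "u \<in> lang X" "v \<in> lang Y" for u v
  proof -
    have "u @ v \<in> permutations_of_set S"
      using assms that by auto
    then show ?thesis
      by (auto simp: permutations_of_set_def)
  qed
  have "lang X \<subseteq> permutations_of_set (set u0)"
    using perm[OF _ v0] perm[OF u0 v0] by (auto simp: permutations_of_set_def)
  moreover have "lang Y \<subseteq> permutations_of_set (set v0)"
    using perm[OF u0] perm[OF u0 v0] by (auto simp: permutations_of_set_def)
  moreover have "card (set u0) + card (set v0) = card S"
    using perm[OF u0 v0] by (metis card_Un_disjoint finite_set)
  ultimately show ?thesis
    using that by blast
qed

lemma card_le_fact_if_subset_permutations_of_set:
  assumes "A \<subseteq> permutations_of_set S"
  shows "card A \<le> fact (card S)"
proof (cases "finite S")
  case True
  then show ?thesis
    using card_mono[OF finite_permutations_of_set assms] by simp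
next
  case False
  then show ?thesis
    using assms by (simp add: permutations_of_set_infinite)
qed

lemma card_lang_mult_le_perm_bound:
  assumes "log_product B1" "homogeneous B1" "homogeneous B2" "deg B2 \<le> deg B1"
    and "lang B1 \<subseteq> permutations_of_set S1" "lang B2 \<subseteq> permutations_of_set S2"
    and "real (card (lang B1)) \<le> perm_bound (card S1)"
  shows "real (card (lang B1) * card (lang B2)) \<le> perm_bound (card S1 + card S2)"
proof -
  obtain u v where u: "u \<in> lang B1" and v: "v \<in> lang B2"
    using lang_nonempty by blast
  have "length u = card S1" "length v = card S2"
    using assms(5,6) u v by (auto intro: length_finite_permutations_of_set)
  moreover have "u \<noteq> []"
    using log_product_Nil_notin[OF assms(1)] u by auto
  ultimately have "1 \<le> card S1"
    by (cases u) auto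
  have "card S2 \<le> card S1"
    using \<open>length u = card S1\<close> \<open>length v = card S2\<close> assms(2-4) u v by (simp add: length_eq_deg)
  with \<open>1 \<le> card S1\<close>
  have "perm_bound (card S1) * fact (card S2) \<le> perm_bound (card S1 + card S2)"
    by (rule perm_bound_mult_fact_le)
  moreover have "real (card (lang B2)) \<le> fact (card S2)"
    using card_le_fact_if_subset_permutations_of_set[OF assms(6)] by (metis of_nat_fact of_nat_le_iff)
  then have "real (card (lang B1) * card (lang B2)) \<le> perm_bound (card S1) * fact (card S2)"
    using assms(7) by (simp add: mult_mono)
  ultimately show ?thesis
    by linarith
qed

theorem card_lang_le_perm_bound:
  assumes "log_product B" "lang B \<subseteq> permutations_of_set S"
  shows "real (card (lang B)) \<le> perm_bound (card S)"
  using assms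
proof (induction B arbitrary: S rule: log_product.induct)
  case (lit a)
  then have "S = {a}"
    by (auto dest: permutations_of_setD)
  then show ?case
    by (simp add: perm_bound_def)
next
  case (left B1 B2)
  obtain S1 S2 where S: "lang B1 \<subseteq> permutations_of_set S1" "lang B2 \<subseteq> permutations_of_set S2"
    "card S1 + card S2 = card S"
    using lang_Concat_permutations_of_set_split[OF left.prems] by blast
  have "real (card (lang (Concat B1 B2))) \<le> real (card (lang B1) * card (lang B2))"
    using card_lang_Concat_le by (simp only: of_nat_le_iff)
  also have "\<dots> \<le> perm_bound (card S)"
    using card_lang_mult_le_perm_bound[OF left.hyps(1-4) S(1,2) left.IH[OF S(1)]] S(3) by simp
  finally show ?case .
next
  case (right B1 B2)
  obtain S2 S1 where S: "lang B2 \<subseteq> permutations_of_set S2" "lang B1 \<subseteq> permutations_of_set S1"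
    "card S2 + card S1 = card S"
    using lang_Concat_permutations_of_set_split[OF right.prems] by blast
  have "real (card (lang (Concat B2 B1))) \<le> real (card (lang B1) * card (lang B2))"
    using card_lang_Concat_le[of B2 B1] by (simp only: of_nat_le_iff mult.commute)
  also have "\<dots> \<le> perm_bound (card S)"
    using card_lang_mult_le_perm_bound[OF right.hyps(1-4) S(2,1) right.IH[OF S(2)]] S(3)
    by (simp add: add.commute)
  finally show ?case .
qed

theorem lemma7p6:
  fixes n :: nat and B :: rexp
  assumes "n \<ge> 1" and "log_product B" and "lang B \<subseteq> perms n"
  shows "real (card (lang B)) \<le>
           fact n * 4 powr (1 - real n) * real n powr ((3 + log 2 (real n)) / 4)"
proof -
  have "perms n = permutations_of_set {1..n}"
    unfolding perms_def permutations_of_set_def by auto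
  then have "real (card (lang B)) \<le> perm_bound (card {1..n})"
    using card_lang_le_perm_bound[OF assms(2)] assms(3) by presburger
  then show ?thesis
    by (simp add: perm_bound_def qpoly_def)
qed

end
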